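(* For every $n$, $\partial_n^{\rm lb}\big(D_n^{\rm lb}(X,\rho)\big)\subset D_{n-1}^{\rm lb}(X,\rho)$; hence $D_*^{\rm lb}(X,\rho)=\{D_n^{\rm lb}(X,\rho),\partial_n^{\rm lb}\}_{n\in\mathbb Z}$ is a subchain complex of $C_*^{\rm lb}(X)$.
   Context: Let $p$ be an odd prime, $X=\mathbb Z_p$, and $[a,b,c]=a-b+c$ for $a,b,c\in X$. Let $\rho:X^2\to X^2$, $\rho((a,b))=(b,a)$. For pairs with the same first entry define $(a,b)\,\underline{\star}\,(a,c)=(c,[a,b,c])$ and $(a,b)\,\overline{\star}\,(a,c)=(c,[a,c,b])$. For $n\ge1$ let $C_n^{\rm lb}(X)$ be the free abelian group on all tuples $((a,b_1),\dots,(a,b_n))$ with $a,b_1,\dots,b_n\in X$, and $C_n^{\rm lb}(X)=0$ for $n\le0$. For $n\ge2$ define $\partial_n^{\rm lb}:C_n^{\rm lb}(X)\to C_{n-1}^{\rm lb}(X)$ by \[ \partial_n^{\rm lb}((a,b_1),\dots,(a,b_n))=\sum_{i=1}^n(-1)^i\Big\{((a,b_1),\dots,\widehat{(a,b_i)},\dots,(a,b_n)) - \big((a,b_1)\underline\star(a,b_i),\dots,(a,b_{i-1})\underline\star(a,b_i),(a,b_{i+1})\overline\star(a,b_i),\dots,(a,b_n)\overline\star(a,b_i)\big)\Big\}, \] i.e. the second tuple is $((b_i,[a,b_1,b_i]),\dots,(b_i,[a,b_{i-1},b_i]),(b_i,[a,b_i,b_{i+1}]),\dots,(b_i,[a,b_i,b_n]))$;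 and $\partial_n^{\rm lb}=0$ for $n\le1$. This makes $C_*^{\rm lb}(X)$ a chain complex. Let $D_n^{\rm lb}(X,\rho)\subset C_n^{\rm lb}(X)$ be the subgroup generated by all elements \[ ((a,b_1),\dots,(a,b_n))+\big((a,b_1)\underline\star(a,b_i),\dots,(a,b_{i-1})\underline\star(a,b_i),\ \rho((a,b_i)),\ (a,b_{i+1})\overline\star(a,b_i),\dots,(a,b_n)\overline\star(a,b_i)\big) \] for $a,b_1,\dots,b_n\in X$ and $i\in\{1,\dots,n\}$. *)

theory Defs
  imports "HOL-Library.Poly_Mapping" "HOL-Computational_Algebra.Primes"
begin

text \<open>X = Z_p is represented by the integers {0..<p}; the heap operation
  [a,b,c] = a - b + c is computed mod p. A basis tuple ((a,b_1),...,(a,b_n))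
  is a list of pairs. Chains are integer-valued finitely supported functions
  (the free abelian group), type (int * int) list =>0 int.\<close>

definition heap :: "int \<Rightarrow> int \<Rightarrow> int \<Rightarrow> int \<Rightarrow> int" where
  "heap p a b c = (a - b + c) mod p"

definition lb_tuple :: "int \<Rightarrow> int \<Rightarrow> (int \<times> int) list \<Rightarrow> bool" where
  "lb_tuple p n t \<longleftrightarrow> n \<ge> 1 \<and> length t = nat n \<and>
     (\<forall>x\<in>set t. fst x \<in> {0..<p} \<and> snd x \<in> {0..<p}) \<and>
     (\<forall>x\<in>set t. \<forall>y\<in>set t. fst x = fst y)"

definition C_lb :: "int \<Rightarrow> int \<Rightarrow> ((int \<times> int) list \<Rightarrow>\<^sub>0 int) set" where
  "C_lb p n = {c. \<forall>t\<in>Poly_Mapping.keys c. lb_tuple p n t}"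

text \<open>0-based index i corresponds to the paper's index i+1\<close>
definition face :: "(int \<times> int) list \<Rightarrow> nat \<Rightarrow> (int \<times> int) list" where
  "face t i = take i t @ drop (Suc i) t"

definition star_before :: "int \<Rightarrow> (int \<times> int) list \<Rightarrow> nat \<Rightarrow> (int \<times> int) list" where
  "star_before p t i = map (\<lambda>(a,b). (snd (t!i), heap p a b (snd (t!i)))) (take i t)"

definition star_after :: "int \<Rightarrow> (int \<times> int) list \<Rightarrow> nat \<Rightarrow> (int \<times> int) list" where
  "star_after p t i = map (\<lambda>(a,b). (snd (t!i), heap p a (snd (t!i)) b)) (drop (Suc i) t)"

definition star_face :: "int \<Rightarrow> (int \<times> int) list \<Rightarrow> nat \<Rightarrow> (int \<times> int) list" where
  "star_face p t i = star_before p t i @ star_after p t i"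

definition rho_tuple :: "int \<Rightarrow> (int \<times> int) list \<Rightarrow> nat \<Rightarrow> (int \<times> int) list" where
  "rho_tuple p t i = star_before p t i @ [(snd (t!i), fst (t!i))] @ star_after p t i"

definition bd_gen :: "int \<Rightarrow> (int \<times> int) list \<Rightarrow> (int \<times> int) list \<Rightarrow>\<^sub>0 int" where
  "bd_gen p t = (\<Sum>i<length t. frag_cmul ((-1) ^ (i+1))
      (frag_of (face t i) - frag_of (star_face p t i)))"

definition bd_lb :: "int \<Rightarrow> int \<Rightarrow> ((int \<times> int) list \<Rightarrow>\<^sub>0 int) \<Rightarrow> (int \<times> int) list \<Rightarrow>\<^sub>0 int" where
  "bd_lb p n c = (if n \<ge> 2 then frag_extend (bd_gen p) c else 0)"

inductive_set D_lb :: "int \<Rightarrow> int \<Rightarrow> ((int \<times> int) list \<Rightarrow>\<^sub>0 int) set" for p n where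
  zero: "0 \<in> D_lb p n"
| gen: "lb_tuple p n t \<Longrightarrow> i < length t \<Longrightarrow>
        frag_of t + frag_of (rho_tuple p t i) \<in> D_lb p n"
| diff: "x \<in> D_lb p n \<Longrightarrow> y \<in> D_lb p n \<Longrightarrow> x - y \<in> D_lb p n"

end

theory Submission imports Defs begin

text \<open>The boundary is additive, so it suffices to show that for every generator
  t + \<rho>_i t of D the sum of the boundaries of t and of \<rho>_i t lies in D. Pair the j-th faces of the
  two boundaries. For j = i the face of \<rho>_i t is the starred face of t and vice versa, so these
  four terms cancel. For j \<noteq> i, taking faces commutes with inserting \<rho>: the j-th (starred) face
  of \<rho>_i t is \<rho> inserted at position i or i - 1 into the j-th (starred) face of t, so the j-th terms
  of the two boundaries combine into a difference of two generators of D in degree n - 1.\<close>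

lemma D_lb_uminus: "x \<in> D_lb p n \<Longrightarrow> - x \<in> D_lb p n"
  using D_lb.diff[OF D_lb.zero] by fastforce

lemma D_lb_add: "x \<in> D_lb p n \<Longrightarrow> y \<in> D_lb p n \<Longrightarrow> x + y \<in> D_lb p n"
  using D_lb.diff[OF _ D_lb_uminus] by fastforce

lemma D_lb_cmul_sign: "x \<in> D_lb p n \<Longrightarrow> frag_cmul ((-1) ^ k) x \<in> D_lb p n"
  by (cases "even k") (auto intro: D_lb_uminus)

lemma D_lb_sum: "(\<And>j. j \<in> A \<Longrightarrow> f j \<in> D_lb p n) \<Longrightarrow> sum f A \<in> D_lb p n"
  by (induction A rule: infinite_finite_induct) (auto intro: D_lb_add D_lb.zero)

lemma D_lb_diff_gen:
  assumes "lb_tuple p n s" "lb_tuple p n s'" "k < length s" "k < length s'"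
  shows "(frag_of s - frag_of s') + (frag_of (rho_tuple p s k) - frag_of (rho_tuple p s' k))
    \<in> D_lb p n"
proof -
  have "(frag_of s - frag_of s') + (frag_of (rho_tuple p s k) - frag_of (rho_tuple p s' k)) =
      (frag_of s + frag_of (rho_tuple p s k)) - (frag_of s' + frag_of (rho_tuple p s' k))"
    by (simp add: algebra_simps)
  also have "\<dots> \<in> D_lb p n"
    using assms by (intro D_lb.diff D_lb.gen)
  finally show ?thesis .
qed

lemma length_face [simp]: "i < length t \<Longrightarrow> length (face t i) = length t - 1"
  by (simp add: face_def)

lemma length_star_face [simp]: "i < length t \<Longrightarrow> length (star_face p t i) = length t - 1"
  by (simp add: star_face_def star_before_def star_after_def)

lemma length_rho_tuple [simp]: "i < length t \<Longrightarrow> length (rho_tuple p t i) = length t"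
  by (simp add: rho_tuple_def star_before_def star_after_def)

lemma nth_face: "k < length t - 1 \<Longrightarrow> face t j ! k = (if k < j then t ! k else t ! Suc k)"
  by (auto simp: face_def nth_append)

lemma nth_star_face:
  "k < length t - 1 \<Longrightarrow> i < length t \<Longrightarrow> star_face p t i ! k =
    (if k < i then (snd (t!i), heap p (fst (t!k)) (snd (t!k)) (snd (t!i)))
     else (snd (t!i), heap p (fst (t!Suc k)) (snd (t!i)) (snd (t!Suc k))))"
  by (auto simp: star_face_def star_before_def star_after_def nth_append split: prod.splits)

lemma nth_rho_tuple:
  "k < length t \<Longrightarrow> i < length t \<Longrightarrow> rho_tuple p t i ! k =
    (if k < i then (snd (t!i), heap p (fst (t!k)) (snd (t!k)) (snd (t!i)))
     else if k = i then (snd (t!i), fst (t!i))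
     else (snd (t!i), heap p (fst (t!k)) (snd (t!i)) (snd (t!k))))"
  by (auto simp: rho_tuple_def star_before_def star_after_def nth_append split: prod.splits)

lemma heap_reduce_left: "heap p (heap p x y z) u v = heap p (x - y + z) u v"
  unfolding heap_def by (metis mod_add_left_eq mod_diff_left_eq)

lemma heap_reduce_middle: "heap p u (heap p x y z) v = heap p u (x - y + z) v"
  unfolding heap_def by (metis mod_add_left_eq mod_diff_right_eq)

lemma heap_reduce_right: "heap p u v (heap p x y z) = heap p u v (x - y + z)"
  by (simp add: heap_def mod_simps)

lemmas heap_reduce = heap_reduce_left heap_reduce_middle heap_reduce_right

lemma heap_range: "p > 0 \<Longrightarrow> heap p x y z \<in> {0..<p}"
  by (simp add: heap_def)

lemma lb_tuple_iff_nth: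
  "lb_tuple p n t \<longleftrightarrow> n \<ge> 1 \<and> length t = nat n \<and>
    (\<forall>k<length t. fst (t!k) \<in> {0..<p} \<and> snd (t!k) \<in> {0..<p}) \<and>
    (\<forall>k<length t. \<forall>l<length t. fst (t!k) = fst (t!l))"
  unfolding lb_tuple_def by (simp add: all_set_conv_all_nth)

locale lb_pointed_tuple =
  fixes p :: int and t :: "(int \<times> int) list" and a :: int and i :: nat
  assumes fst_nth: "\<And>k. k < length t \<Longrightarrow> fst (t!k) = a"
    and snd_nth_range: "\<And>k. k < length t \<Longrightarrow> snd (t!k) \<in> {0..<p}"
    and base_range: "a \<in> {0..<p}"
    and index: "i < length t"
begin

lemma snd_nth_mod: "k < length t \<Longrightarrow> snd (t!k) mod p = snd (t!k)"
  using snd_nth_range by simp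

lemma base_mod: "a mod p = a"
  using base_range by simp

lemmas nth_simps =
  prod_eq_iff nth_face nth_rho_tuple nth_star_face fst_nth heap_reduce snd_nth_mod base_mod

lemma face_rho_tuple_self: "face (rho_tuple p t i) i = star_face p t i"
  using index by (intro nth_equalityI) (auto simp: nth_simps)

text \<open>The underlying heap identity [c, [a,b,c], a] = b holds only modulo p, so it needs the
  entries of t to be reduced.\<close>
lemma star_face_rho_tuple_self: "star_face p (rho_tuple p t i) i = face t i"
  using index by (intro nth_equalityI)
    (auto simp: nth_simps, auto simp: heap_def algebra_simps snd_nth_mod base_mod)

lemma face_rho_tuple_below: "j < i \<Longrightarrow> face (rho_tuple p t i) j = rho_tuple p (face t j) (i - 1)"
  using index by (intro nth_equalityI) (auto simp: nth_simps)

lemma face_rho_tuple_above: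
  "i < j \<Longrightarrow> j < length t \<Longrightarrow> face (rho_tuple p t i) j = rho_tuple p (face t j) i"
  using index by (intro nth_equalityI) (auto simp: nth_simps)

lemma star_face_rho_tuple_below:
  "j < i \<Longrightarrow> star_face p (rho_tuple p t i) j = rho_tuple p (star_face p t j) (i - 1)"
  using index by (intro nth_equalityI)
    (auto simp: nth_simps, auto simp: heap_def algebra_simps snd_nth_mod base_mod)

lemma star_face_rho_tuple_above:
  "i < j \<Longrightarrow> j < length t \<Longrightarrow> star_face p (rho_tuple p t i) j = rho_tuple p (star_face p t j) i"
  using index by (intro nth_equalityI)
    (auto simp: nth_simps, auto simp: heap_def algebra_simps snd_nth_mod base_mod)

end

lemma lb_pointed_tuple_lb_tuple:
  assumes "lb_tuple p n t" "i < length t"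
  shows "lb_pointed_tuple p t (fst (t!0)) i"
proof
  have "0 < length t"
    using assms(2) by linarith
  then show "\<And>k. k < length t \<Longrightarrow> fst (t!k) = fst (t!0)" "fst (t!0) \<in> {0..<p}"
    using assms(1) unfolding lb_tuple_iff_nth by blast+
  show "\<And>k. k < length t \<Longrightarrow> snd (t!k) \<in> {0..<p}"
    using assms(1) unfolding lb_tuple_iff_nth by blast
qed (fact assms(2))

lemma lb_tuple_modulus_pos: "lb_tuple p n t \<Longrightarrow> p > 0"
  by (cases t) (auto simp: lb_tuple_def)

lemma set_star_face:
  "p > 0 \<Longrightarrow> x \<in> set (star_face p t i) \<Longrightarrow> fst x = snd (t!i) \<and> snd x \<in> {0..<p}"
  by (auto simp: star_face_def star_before_def star_after_def heap_range simp del: atLeastLessThan_iff)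

lemma set_rho_tuple:
  "p > 0 \<Longrightarrow> fst (t!i) \<in> {0..<p} \<Longrightarrow> x \<in> set (rho_tuple p t i) \<Longrightarrow>
    fst x = snd (t!i) \<and> snd x \<in> {0..<p}"
  by (auto simp: rho_tuple_def star_before_def star_after_def heap_range simp del: atLeastLessThan_iff)

lemma lb_tuple_face:
  assumes "lb_tuple p n t" "n \<ge> 2" "j < length t"
  shows "lb_tuple p (n - 1) (face t j)"
proof -
  have "set (face t j) \<subseteq> set t"
    unfolding face_def using set_take_subset set_drop_subset by fastforce
  then show ?thesis
    using assms unfolding lb_tuple_def by (auto simp: nat_diff_distrib)
qed

lemma lb_tuple_star_face:
  assumes t: "lb_tuple p n t" and "n \<ge> 2" "j < length t"
  shows "lb_tuple p (n - 1) (star_face p t j)"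
proof -
  have "snd (t!j) \<in> {0..<p}"
    using t \<open>j < length t\<close> nth_mem unfolding lb_tuple_def by blast
  then show ?thesis
    using assms set_star_face[OF lb_tuple_modulus_pos[OF t], of _ t j]
    unfolding lb_tuple_def by (auto simp: nat_diff_distrib)
qed

lemma lb_tuple_rho_tuple:
  assumes t: "lb_tuple p n t" and "j < length t"
  shows "lb_tuple p n (rho_tuple p t j)"
proof -
  have "fst (t!j) \<in> {0..<p}" "snd (t!j) \<in> {0..<p}"
    using t \<open>j < length t\<close> nth_mem unfolding lb_tuple_def by blast+
  then show ?thesis
    using assms set_rho_tuple[OF lb_tuple_modulus_pos[OF t], of t j]
    unfolding lb_tuple_def by auto
qed

lemma bd_gen_add:
  "length r = length t \<Longrightarrow> bd_gen p t + bd_gen p r =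
    (\<Sum>j<length t. frag_cmul ((-1) ^ (j+1))
       ((frag_of (face t j) - frag_of (star_face p t j)) +
        (frag_of (face r j) - frag_of (star_face p r j))))"
  by (simp add: bd_gen_def sum.distrib frag_cmul_distrib2)

lemma bd_gen_generator:
  assumes t: "lb_tuple p n t" and n: "n \<ge> 2" and i: "i < length t"
  shows "bd_gen p t + bd_gen p (rho_tuple p t i) \<in> D_lb p (n - 1)"
proof -
  interpret lb_pointed_tuple p t "fst (t!0)" i
    using lb_pointed_tuple_lb_tuple[OF t i] .
  define r where "r = rho_tuple p t i"
  define paired where "paired j =
    (frag_of (face t j) - frag_of (star_face p t j)) + (frag_of (face r j) - frag_of (star_face p r j))"
    for j
  have paired_D_lb: "paired j \<in> D_lb p (n - 1)" if j: "j < length t" for j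
  proof -
    have faces: "lb_tuple p (n - 1) (face t j)" "lb_tuple p (n - 1) (star_face p t j)"
      using lb_tuple_face[OF t n j] lb_tuple_star_face[OF t n j] .
    consider "j = i" | "j < i" | "i < j" by linarith
    then show ?thesis
    proof cases
      case 1
      then show ?thesis
        by (simp add: paired_def r_def face_rho_tuple_self star_face_rho_tuple_self
            D_lb.zero)
    next
      case 2
      then show ?thesis
        using D_lb_diff_gen[OF faces, of "i - 1"] i
        by (simp add: paired_def r_def face_rho_tuple_below star_face_rho_tuple_below)
    next
      case 3
      then show ?thesis
        using D_lb_diff_gen[OF faces, of i] j
        by (simp add: paired_def r_def face_rho_tuple_above star_face_rho_tuple_above)
    qed
  qed
  have "bd_gen p t + bd_gen p r = (\<Sum>j<length t. frag_cmul ((-1) ^ (j+1)) (paired j))"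
    unfolding paired_def using i by (simp add: r_def bd_gen_add)
  also have "\<dots> \<in> D_lb p (n - 1)"
    using paired_D_lb by (intro D_lb_sum D_lb_cmul_sign) simp
  finally show ?thesis
    unfolding r_def .
qed

lemma D_lb_subset_C_lb: "D_lb p n \<subseteq> C_lb p n"
proof
  fix x assume "x \<in> D_lb p n"
  then show "x \<in> C_lb p n"
  proof induction
    case zero
    then show ?case by (simp add: C_lb_def)
  next
    case (gen t i)
    then show ?case
      using keys_add[of "frag_of t" "frag_of (rho_tuple p t i)"] lb_tuple_rho_tuple[OF gen]
      by (auto simp: C_lb_def keys_frag_of)
  next
    case (diff x y)
    then show ?case using keys_diff[of x y] by (auto simp: C_lb_def)
  qed
qed

lemma bd_lb_D_lb: "x \<in> D_lb p n \<Longrightarrow> bd_lb p n x \<in> D_lb p (n - 1)"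
proof (induction rule: D_lb.induct)
  case zero
  then show ?case by (simp add: bd_lb_def D_lb.zero)
next
  case (gen t i)
  then show ?case
    using bd_gen_generator[OF gen(1) _ gen(2)]
    by (simp add: bd_lb_def frag_extend_add D_lb.zero)
next
  case (diff x y)
  then show ?case
    by (cases "n \<ge> 2") (simp_all add: bd_lb_def frag_extend_diff D_lb.diff D_lb.zero)
qed

theorem lemma3p1:
  fixes p :: int
  assumes "prime p" and "odd p"
  shows "\<forall>n::int. D_lb p n \<subseteq> C_lb p n \<and> bd_lb p n ` D_lb p n \<subseteq> D_lb p (n - 1)"
  using D_lb_subset_C_lb bd_lb_D_lb by blast

end
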